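(* Fix integers $d\ge 2$ and $n$ with $d+2\leq n\leq 2d$. Every $n$-point spherical code $X$ in $S^{d-1}$ has no Tammes rattler.
   Context: $[n]=\{1,\ldots,n\}$. For a configuration $X=\{x_i\}_{i\in[n]}$ in the unit sphere $S^{d-1}\subseteq\mathbb{R}^d$, $\alpha(X):=\max_{i\neq j}\langle x_i,x_j\rangle$. A spherical code is an $n$-point configuration in $S^{d-1}$ minimizing $\alpha$. A Tammes rattler of $X$ is an index $j\in[n]$ with $\max_{i\in[n]\setminus\{j\}}\langle x_i,x_j\rangle<\alpha(X)$. *)

theory Defs
  imports "HOL-Analysis.Analysis"
begin

text \<open>A configuration of n points is a family x indexed by [n] = {1..n}
  with values in the unit sphere of a Euclidean space of dimension d = DIM('a).\<close>

definition on_sphere :: "nat \<Rightarrow> (nat \<Rightarrow> 'a::euclidean_space) \<Rightarrow> bool" where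
  "on_sphere n x \<longleftrightarrow> (\<forall>i\<in>{1..n}. norm (x i) = 1)"

definition alpha :: "nat \<Rightarrow> (nat \<Rightarrow> 'a::euclidean_space) \<Rightarrow> real" where
  "alpha n x = Max {inner (x i) (x j) | i j. i \<in> {1..n} \<and> j \<in> {1..n} \<and> i \<noteq> j}"

definition spherical_code :: "nat \<Rightarrow> (nat \<Rightarrow> 'a::euclidean_space) \<Rightarrow> bool" where
  "spherical_code n x \<longleftrightarrow> on_sphere n x \<and>
     (\<forall>y::nat \<Rightarrow> 'a. on_sphere n y \<longrightarrow> alpha n x \<le> alpha n y)"

definition tammes_rattler :: "nat \<Rightarrow> (nat \<Rightarrow> 'a::euclidean_space) \<Rightarrow> nat \<Rightarrow> bool" where
  "tammes_rattler n x j \<longleftrightarrow> j \<in> {1..n} \<and>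
     Max {inner (x i) (x j) | i. i \<in> {1..n} - {j}} < alpha n x"

end

theory Submission
  imports Defs
begin

text \<open>Since \<open>n \<le> 2d\<close>, the points can be placed among the vertices \<open>\<plusminus>e\<^sub>k\<close> of the
  cross-polytope, whose mutual inner products are all \<open>\<le> 0\<close>; hence a spherical code has
  \<open>\<alpha> \<le> 0\<close>. If \<open>x\<^sub>j\<close> were a rattler, then \<open>\<langle>x\<^sub>i, x\<^sub>j\<rangle> < \<alpha> \<le> 0\<close> for all \<open>i \<noteq> j\<close>, while the
  other points have pairwise nonpositive inner products. Vectors with pairwise nonpositive inner
  products lying strictly on one side of a hyperplane are linearly independent, so \<open>n - 1 \<le> d\<close>,
  contradicting \<open>n \<ge> d + 2\<close>.\<close>

lemma obtuse_combination_coeff_nonpos: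
  fixes t :: "'a::real_inner set" and u :: 'a
  assumes "finite t"
    and obtuse: "pairwise (\<lambda>v w. inner v w \<le> 0) t"
    and neg: "\<forall>v\<in>t. inner u v < 0"
    and comb: "(\<Sum>v\<in>t. c v *\<^sub>R v) = 0"
    and "v \<in> t"
  shows "c v \<le> 0"
proof (rule ccontr)
  define P where "P = {v\<in>t. c v > 0}"
  assume "\<not> c v \<le> 0"
  then have "P \<noteq> {}" using \<open>v \<in> t\<close> by (auto simp: P_def)
  have finP: "finite P" using \<open>finite t\<close> by (simp add: P_def)
  define w where "w = (\<Sum>p\<in>P. c p *\<^sub>R p)"
  have "w = - (\<Sum>q\<in>t - P. c q *\<^sub>R q)"
  proof -
    have "P \<subseteq> t" by (auto simp: P_def)
    then have "(\<Sum>q\<in>t - P. c q *\<^sub>R q) + w = 0"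
      using comb \<open>finite t\<close> unfolding w_def by (simp add: sum.subset_diff)
    then show ?thesis by (simp add: eq_neg_iff_add_eq_0 add.commute)
  qed
  then have "inner w w = - inner w (\<Sum>q\<in>t - P. c q *\<^sub>R q)"
    by (metis inner_minus_right minus_minus)
  also have "\<dots> = - (\<Sum>p\<in>P. \<Sum>q\<in>t - P. c p * c q * inner p q)"
    unfolding w_def
    by (simp add: inner_sum_left inner_sum_right sum_distrib_left mult.assoc mult.left_commute
        sum.swap[of _ "t - P" P])
  also have "\<dots> \<le> 0"
  proof -
    have "0 \<le> c p * c q * inner p q" if "p \<in> P" "q \<in> t - P" for p q
    proof -
      have "inner p q \<le> 0" using obtuse that by (auto simp: P_def pairwise_def)
      moreover have "c p * c q \<le> 0" using that by (auto simp: P_def mult_le_0_iff)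
      ultimately show ?thesis by (simp add: mult_nonpos_nonpos)
    qed
    then show ?thesis by (simp add: sum_nonneg del: Diff_iff)
  qed
  finally have "w = 0" using inner_ge_zero[of w] by (simp add: antisym)
  have "0 < (\<Sum>p\<in>P. c p * inner (- u) p)"
    using finP \<open>P \<noteq> {}\<close> neg by (intro sum_pos) (auto simp: P_def mult_pos_neg)
  also have "\<dots> = inner (- u) w"
    unfolding w_def by (simp add: inner_sum_right)
  finally show False using \<open>w = 0\<close> by simp
qed

lemma obtuse_set_independent:
  fixes t :: "'a::real_inner set" and u :: 'a
  assumes "finite t"
    and "pairwise (\<lambda>v w. inner v w \<le> 0) t"
    and "\<forall>v\<in>t. inner u v < 0"
  shows "independent t"
proof (rule independent_if_scalars_zero[OF \<open>finite t\<close>])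
  fix c v
  assume comb: "(\<Sum>v\<in>t. c v *\<^sub>R v) = 0" and "v \<in> t"
  then have "c v \<le> 0"
    using assms by (intro obtuse_combination_coeff_nonpos)
  moreover have "(\<Sum>v\<in>t. (- c v) *\<^sub>R v) = 0"
    using comb by (simp add: sum_negf)
  then have "- c v \<le> 0"
    using assms \<open>v \<in> t\<close> by (intro obtuse_combination_coeff_nonpos[where c = "\<lambda>v. - c v"])
  ultimately show "c v = 0" by simp
qed

lemma alpha_le_iff:
  fixes x :: "nat \<Rightarrow> 'a::euclidean_space"
  assumes "2 \<le> n"
  shows "alpha n x \<le> a \<longleftrightarrow>
    (\<forall>i\<in>{1..n}. \<forall>j\<in>{1..n}. i \<noteq> j \<longrightarrow> inner (x i) (x j) \<le> a)"
proof -
  let ?S = "{inner (x i) (x j) | i j. i \<in> {1..n} \<and> j \<in> {1..n} \<and> i \<noteq> j}"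
  have "?S \<subseteq> (\<lambda>(i, j). inner (x i) (x j)) ` ({1..n} \<times> {1..n})" by auto
  then have "finite ?S" by (rule finite_subset) simp
  moreover have "inner (x 1) (x 2) \<in> ?S"
    using assms by force
  then have "?S \<noteq> {}" by (metis empty_iff)
  ultimately have "alpha n x \<le> a \<longleftrightarrow> (\<forall>s\<in>?S. s \<le> a)"
    unfolding alpha_def by (rule Max_le_iff)
  also have "\<dots> \<longleftrightarrow> (\<forall>i\<in>{1..n}. \<forall>j\<in>{1..n}. i \<noteq> j \<longrightarrow> inner (x i) (x j) \<le> a)"
    by (intro iffI ballI impI) auto
  finally show ?thesis .
qed

lemma inner_le_alpha:
  fixes x :: "nat \<Rightarrow> 'a::euclidean_space"
  assumes "i \<in> {1..n}" "j \<in> {1..n}" "i \<noteq> j"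
  shows "inner (x i) (x j) \<le> alpha n x"
proof -
  have "2 \<le> n" using assms by auto
  then show ?thesis using alpha_le_iff[of n x "alpha n x"] assms by blast
qed

lemma tammes_rattler_inner_less_alpha:
  assumes "tammes_rattler n x j" "i \<in> {1..n}" "i \<noteq> j"
  shows "inner (x i) (x j) < alpha n x"
proof -
  let ?S = "{inner (x i) (x j) | i. i \<in> {1..n} - {j}}"
  have "finite ?S" by simp
  then have "inner (x i) (x j) \<le> Max ?S"
    by (rule Max_ge) (use assms(2,3) in blast)
  moreover have "Max ?S < alpha n x"
    using assms(1) by (simp add: tammes_rattler_def)
  ultimately show ?thesis by linarith
qed

lemma cross_polytope_configuration:
  assumes "n \<le> 2 * DIM('a::euclidean_space)"
  obtains y :: "nat \<Rightarrow> 'a::euclidean_space" where "on_sphere n y"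
    and "\<And>i j. i \<in> {1..n} \<Longrightarrow> j \<in> {1..n} \<Longrightarrow> i \<noteq> j \<Longrightarrow> inner (y i) (y j) \<le> 0"
proof -
  define d where "d = DIM('a)"
  obtain b :: "nat \<Rightarrow> 'a" where b: "bij_betw b {0..<d} Basis"
    unfolding d_def using ex_bij_betw_nat_finite[OF finite_Basis] by blast
  have b_inner: "inner (b k) (b l) = (if k = l then 1 else 0)" if "k < d" "l < d" for k l
  proof -
    have "b k \<in> Basis" "b l \<in> Basis"
      using that b by (auto dest: bij_betwE)
    moreover have "b k = b l \<longleftrightarrow> k = l"
      using that b by (auto simp: bij_betw_def inj_on_eq_iff)
    ultimately show ?thesis by (simp add: inner_Basis)
  qed
  \<comment> \<open>the cross-polytope, listed as \<open>e\<^sub>1, \<dots>, e\<^sub>d, -e\<^sub>1, \<dots>, -e\<^sub>d\<close>\<close>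
  define k where "k i = (if i \<le> d then i - 1 else i - 1 - d)" for i
  define s :: "nat \<Rightarrow> real" where "s i = (if i \<le> d then 1 else -1)" for i
  define y where "y i = s i *\<^sub>R b (k i)" for i
  have k_less: "k i < d" if "i \<in> {1..n}" for i
    using that assms by (auto simp: k_def d_def)
  have y_inner: "inner (y i) (y j) = s i * s j * (if k i = k j then 1 else 0)"
    if "i \<in> {1..n}" "j \<in> {1..n}" for i j
    using b_inner[OF k_less k_less, OF that] by (simp add: y_def)
  show thesis
  proof
    show "on_sphere n y"
      unfolding on_sphere_def norm_eq_1 using y_inner by (simp add: s_def)
    show "inner (y i) (y j) \<le> 0" if "i \<in> {1..n}" "j \<in> {1..n}" "i \<noteq> j" for i j
      using that by (auto simp: y_inner s_def k_def split: if_splits)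
  qed
qed

lemma spherical_code_alpha_nonpos:
  fixes x :: "nat \<Rightarrow> 'a::euclidean_space"
  assumes "2 \<le> n" "n \<le> 2 * DIM('a)" "spherical_code n x"
  shows "alpha n x \<le> 0"
proof -
  obtain y :: "nat \<Rightarrow> 'a" where "on_sphere n y"
    and "\<And>i j. i \<in> {1..n} \<Longrightarrow> j \<in> {1..n} \<Longrightarrow> i \<noteq> j \<Longrightarrow> inner (y i) (y j) \<le> 0"
    using cross_polytope_configuration[OF assms(2)] by blast
  then have "alpha n y \<le> 0"
    by (simp add: alpha_le_iff[OF assms(1)])
  moreover have "alpha n x \<le> alpha n y"
    using assms(3) \<open>on_sphere n y\<close> by (simp add: spherical_code_def)
  ultimately show ?thesis by linarith
qed

lemma tammes_rattler_imp_le_Suc_DIM: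
  fixes x :: "nat \<Rightarrow> 'a::euclidean_space"
  assumes "on_sphere n x" "alpha n x \<le> 0" "tammes_rattler n x j"
  shows "n \<le> Suc DIM('a)"
proof -
  define I where "I = {1..n} - {j}"
  have "j \<in> {1..n}" using assms(3) by (simp add: tammes_rattler_def)
  have obtuse: "inner (x i) (x k) \<le> 0" if "i \<in> I" "k \<in> I" "i \<noteq> k" for i k
    using inner_le_alpha[of i n k x] that assms(2) unfolding I_def by simp
  have negative: "inner (x j) (x i) < 0" if "i \<in> I" for i
    using tammes_rattler_inner_less_alpha[OF assms(3), of i] that assms(2)
    unfolding I_def by (simp add: inner_commute)
  have "inj_on x I"
  proof (rule inj_onI, rule ccontr)
    fix i k assume "i \<in> I" "k \<in> I" "x i = x k" "i \<noteq> k"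
    then have "inner (x i) (x i) \<le> 0" using obtuse by metis
    moreover have "inner (x i) (x i) = 1"
      using assms(1) \<open>i \<in> I\<close> unfolding on_sphere_def I_def norm_eq_1 by simp
    ultimately show False by simp
  qed
  have "independent (x ` I)"
  proof (rule obtuse_set_independent)
    show "finite (x ` I)" by (simp add: I_def)
    show "pairwise (\<lambda>v w. inner v w \<le> 0) (x ` I)"
      using obtuse unfolding pairwise_image by (auto simp: pairwise_def)
    show "\<forall>v\<in>x ` I. inner (x j) v < 0"
      using negative by blast
  qed
  then have "card (x ` I) \<le> DIM('a)" by (simp add: independent_bound)
  moreover have "card (x ` I) = n - 1"
    using \<open>inj_on x I\<close> \<open>j \<in> {1..n}\<close> by (simp add: card_image I_def)
  ultimately show ?thesis by linarith
qed

theorem lemma9: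
  fixes x :: "nat \<Rightarrow> 'a::euclidean_space" and n :: nat
  assumes "DIM('a) \<ge> 2"
    and "DIM('a) + 2 \<le> n" and "n \<le> 2 * DIM('a)"
    and "spherical_code n x"
  shows "\<not> (\<exists>j. tammes_rattler n x j)"
proof
  assume "\<exists>j. tammes_rattler n x j"
  then obtain j where "tammes_rattler n x j" ..
  have "on_sphere n x"
    using assms(4) by (simp add: spherical_code_def)
  moreover have "alpha n x \<le> 0"
    using assms(2-4) by (intro spherical_code_alpha_nonpos) auto
  ultimately have "n \<le> Suc DIM('a)"
    using \<open>tammes_rattler n x j\<close> by (rule tammes_rattler_imp_le_Suc_DIM)
  with assms(2) show False by linarith
qed

end
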